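(* Let $A$ be a finite tree rooted at $e$, with all arcs directed from the root towards the leaves, let $R\subseteq V(A)$ be a set of destinations containing all leaves of $A$, and let $D\subseteq V(A)$. Let $u\neq e$ be a vertex of $A$ having exactly one child $u_1$, and let $(b,d,\mathrm{load})$ be the window of the solution $\mathcal{S}(D)$ on the arc $a^{u_1}$. Then the window of $\mathcal{S}(D)$ on the arc $a^{u}$ is \[ \begin{cases} (1,\ d+1,\ \mathrm{load}+1) & \text{if } u\in D,\\ (b+1,\ d,\ \mathrm{load}+b+1) & \text{if } u\notin D \text{ and } u\in R,\\ (b,\ d,\ \mathrm{load}+b) & \text{if } u\notin D \text{ and } u\notin R. \end{cases} \]
   Context: Setting (multicast with diffusing nodes): $A$ is a multicast tree for a request $(e,R)$: a tree rooted at the source $e$, arcs directed away from $e$, whose leaves lie in the destination set $R$. A set $D\subseteq V(A)$ is a set of diffusing (branching) nodes. The solution $\mathcal{S}(D)$ is a set of directed paths in $A$ such that: every node of $R$ is the final extremity of exactly one path; every node of $D$ is the final extremity of at most one path; the origin of each path is either $e$ or a node of $D$ which is itself the final extremity of some path; a node of $D$ lies on a path only as its origin or final extremity. As in the paper, $\mathcal{S}(D)$ is taken to be the solution in which each vertex $x\neq e$ of $R\cup D$ is the final extremity of exactly one path, whose origin is the nearest proper ancestor of $x$ belonging to $D\cup\{e\}$. For a vertex $u$, $A^u$ is the subtree of $A$ rooted at $u$, and for $u\neq e$, $a^u$ is the arc joining the parent of $u$ to $u$. The path number $\mathrm{pn}(u)$ is the number of paths of $\mathcal{S}(D)$ that pass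 through $u$ or terminate at $u$ (equivalently, that use the arc $a^u$). The window of $\mathcal{S}(D)$ on arc $a^u$ is the triple $(\mathrm{pn}(u),\ |D\cap V(A^u)|,\ \mathrm{load})$, where $\mathrm{load}=\sum_{w\in V(A^u)}\mathrm{pn}(w)$ is the load of $\mathcal{S}(D)$ in $A^u$, i.e. the number of pairs (path, arc) with the path using the arc, over the arcs of $A^u$ together with $a^u$. *)

theory Defs
  imports Main
begin

definition rooted_tree :: "'a set \<Rightarrow> ('a \<times> 'a) set \<Rightarrow> 'a \<Rightarrow> bool" where
  "rooted_tree V E e \<longleftrightarrow> finite V \<and> e \<in> V \<and> E \<subseteq> V \<times> V
     \<and> (\<forall>v\<in>V. (e, v) \<in> E\<^sup>*)
     \<and> (\<forall>x. (x, e) \<notin> E)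
     \<and> (\<forall>v\<in>V - {e}. \<exists>!p. (p, v) \<in> E)"

definition children :: "('a \<times> 'a) set \<Rightarrow> 'a \<Rightarrow> 'a set" where
  "children E u = {v. (u, v) \<in> E}"

definition leaves :: "'a set \<Rightarrow> ('a \<times> 'a) set \<Rightarrow> 'a set" where
  "leaves V E = {v \<in> V. children E v = {}}"

definition subtree :: "('a \<times> 'a) set \<Rightarrow> 'a \<Rightarrow> 'a set" where
  "subtree E u = {v. (u, v) \<in> E\<^sup>*}"

text \<open>Origin of the path of S(D) ending at x: nearest proper ancestor of x in D \<union> {e}.\<close>
definition origin :: "('a \<times> 'a) set \<Rightarrow> 'a \<Rightarrow> 'a set \<Rightarrow> 'a \<Rightarrow> 'a" where
  "origin E e D x = (THE w. w \<in> D \<union> {e} \<and> (w, x) \<in> E\<^sup>+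
      \<and> (\<forall>w'. w' \<in> D \<union> {e} \<and> (w', x) \<in> E\<^sup>+ \<longrightarrow> (w', w) \<in> E\<^sup>*))"

text \<open>Path number pn(u): the number of paths of S(D) using the arc a^u. The path of S(D)
  ending at x (for x \<in> (R \<union> D) - {e}) goes from origin x to x and uses the arc a^y
  exactly for origin x \<prec> y \<preceq> x.\<close>
definition pn :: "'a set \<Rightarrow> ('a \<times> 'a) set \<Rightarrow> 'a \<Rightarrow> 'a set \<Rightarrow> 'a set \<Rightarrow> 'a \<Rightarrow> nat" where
  "pn V E e R D u = card {x \<in> (R \<union> D) - {e}. (origin E e D x, u) \<in> E\<^sup>+ \<and> (u, x) \<in> E\<^sup>*}"

definition window :: "'a set \<Rightarrow> ('a \<times> 'a) set \<Rightarrow> 'a \<Rightarrow> 'a set \<Rightarrow> 'a set \<Rightarrow> 'a \<Rightarrow> nat \<times> nat \<times> nat" where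
  "window V E e R D u = (pn V E e R D u, card (D \<inter> subtree E u),
      (\<Sum>w\<in>subtree E u. pn V E e R D w))"

end

theory Submission
  imports Defs
begin

text \<open>In a rooted tree the ancestors of a vertex form a chain, so every vertex \<open>x \<noteq> e\<close> has a
  unique nearest proper ancestor in \<open>D \<union> {e}\<close>, the origin of its path. If \<open>u \<in> D\<close>, a path
  ending strictly below \<open>u\<close> starts at \<open>u\<close> or below it, so only the path ending at \<open>u\<close> uses
  \<open>a\<^sup>u\<close>. If \<open>u \<notin> D\<close>, the origin of a path ending in \<open>A\<^bsup>u1\<^esup>\<close> is never \<open>u\<close>, so the paths using \<open>a\<^sup>u\<close>
  are those using \<open>a\<^bsup>u1\<^esup>\<close>, together with the path ending at \<open>u\<close> when \<open>u \<in> R\<close>. The other two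
  components follow from \<open>V(A\<^sup>u) = {u} \<union> V(A\<^bsup>u1\<^esup>)\<close>.\<close>

definition nearest_ancestor_in :: "('a \<times> 'a) set \<Rightarrow> 'a set \<Rightarrow> 'a \<Rightarrow> 'a \<Rightarrow> bool" where
  "nearest_ancestor_in E S x w \<longleftrightarrow>
     w \<in> S \<and> (w, x) \<in> E\<^sup>+ \<and> (\<forall>w'\<in>S. (w', x) \<in> E\<^sup>+ \<longrightarrow> (w', w) \<in> E\<^sup>*)"

definition path_ends_through :: "('a \<times> 'a) set \<Rightarrow> 'a \<Rightarrow> 'a set \<Rightarrow> 'a set \<Rightarrow> 'a \<Rightarrow> 'a set" where
  "path_ends_through E e R D u =
     {x \<in> (R \<union> D) - {e}. (origin E e D x, u) \<in> E\<^sup>+ \<and> (u, x) \<in> E\<^sup>*}"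

lemma pn_eq_card_path_ends_through: "pn V E e R D u = card (path_ends_through E e R D u)"
  unfolding pn_def path_ends_through_def ..

lemma trancl_into_last_arc_source:
  assumes parent_unique: "\<And>q. (q, v) \<in> E \<Longrightarrow> q = p"
    and "(w, v) \<in> E\<^sup>+" and "(p, v) \<in> E"
  shows "(w, p) \<in> E\<^sup>*"
  using tranclD2[OF assms(2)] parent_unique by blast

lemma subtree_single_child:
  assumes "children E u = {u1}"
  shows "subtree E u = insert u (subtree E u1)"
proof -
  have "(u, v) \<in> E\<^sup>* \<longleftrightarrow> v = u \<or> (u1, v) \<in> E\<^sup>*" for v
    using assms unfolding children_def
    by (auto elim: converse_rtranclE intro: converse_rtrancl_into_rtrancl)
  then show ?thesis unfolding subtree_def by auto
qed

context
  fixes V :: "'a set" and E :: "('a \<times> 'a) set" and e :: 'a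
  assumes tree: "rooted_tree V E e"
begin

lemma rooted_tree_arc_in_V: "(a, b) \<in> E \<Longrightarrow> a \<in> V \<and> b \<in> V"
  using tree unfolding rooted_tree_def by blast

lemma rooted_tree_rtrancl_closed: "(a, b) \<in> E\<^sup>* \<Longrightarrow> a \<in> V \<Longrightarrow> b \<in> V"
  by (induction rule: rtrancl_induct) (auto dest: rooted_tree_arc_in_V)

lemma rooted_tree_root_reaches: "v \<in> V \<Longrightarrow> (e, v) \<in> E\<^sup>*"
  using tree unfolding rooted_tree_def by blast

lemma rooted_tree_no_arc_to_root: "(x, e) \<notin> E"
  using tree unfolding rooted_tree_def by blast

lemma rooted_tree_parent_unique: "(p, v) \<in> E \<Longrightarrow> (q, v) \<in> E \<Longrightarrow> p = q"
  using tree rooted_tree_arc_in_V rooted_tree_no_arc_to_root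
  unfolding rooted_tree_def by (metis Diff_iff singletonD)

lemma rooted_tree_acyclic: "(v, v) \<notin> E\<^sup>+"
proof
  assume cycle: "(v, v) \<in> E\<^sup>+"
  then have "v \<in> V" by (auto dest: tranclD2 rooted_tree_arc_in_V)
  then have "(e, v) \<in> E\<^sup>*" by (rule rooted_tree_root_reaches)
  then show False using cycle
  proof (induction rule: rtrancl_induct)
    case base
    then show False by (auto dest: tranclD2 simp: rooted_tree_no_arc_to_root)
  next
    case (step y z)
    \<comment> \<open>a cycle through \<open>z\<close> enters \<open>z\<close> by its unique arc, from \<open>y\<close>\<close>
    then have "(z, y) \<in> E\<^sup>*"
      by (intro trancl_into_last_arc_source[where v = z and p = y])
        (auto intro: rooted_tree_parent_unique)
    then show False using step by (meson rtrancl_into_trancl2)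
  qed
qed

lemma rooted_tree_rtrancl_antisym: "(a, b) \<in> E\<^sup>* \<Longrightarrow> (b, a) \<in> E\<^sup>* \<Longrightarrow> a = b"
  using rooted_tree_acyclic by (meson rtranclD rtrancl_trancl_trancl)

lemma nearest_ancestor_in_unique:
  "nearest_ancestor_in E S x w \<Longrightarrow> nearest_ancestor_in E S x w' \<Longrightarrow> w = w'"
  unfolding nearest_ancestor_in_def by (blast intro: rooted_tree_rtrancl_antisym)

lemma nearest_ancestor_in_exists:
  assumes "(e, x) \<in> E\<^sup>*" and "x \<noteq> e" and "e \<in> S"
  shows "\<exists>w. nearest_ancestor_in E S x w"
  using assms(1,2)
proof (induction rule: rtrancl_induct)
  case base
  then show ?case by simp
next
  case (step y z)
  have below_y: "(w', y) \<in> E\<^sup>*" if "(w', z) \<in> E\<^sup>+" for w'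
    using that step(2)
    by (intro trancl_into_last_arc_source[where v = z and p = y])
      (auto intro: rooted_tree_parent_unique)
  show ?case
  proof (cases "y \<in> S")
    case True
    with step(2) below_y show ?thesis unfolding nearest_ancestor_in_def by blast
  next
    case False
    \<comment> \<open>then \<open>z\<close> inherits the nearest ancestor of its parent \<open>y \<noteq> e\<close>\<close>
    with \<open>e \<in> S\<close> step.IH obtain w where w: "nearest_ancestor_in E S y w" by auto
    have "nearest_ancestor_in E S z w"
      unfolding nearest_ancestor_in_def
    proof (intro conjI ballI impI)
      show "w \<in> S" "(w, z) \<in> E\<^sup>+" using w step(2) unfolding nearest_ancestor_in_def by auto
      fix w' assume "w' \<in> S" "(w', z) \<in> E\<^sup>+"
      with False below_y have "(w', y) \<in> E\<^sup>+" by (metis rtranclD)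
      with \<open>w' \<in> S\<close> w show "(w', w) \<in> E\<^sup>*" unfolding nearest_ancestor_in_def by blast
    qed
    then show ?thesis ..
  qed
qed

lemma origin_nearest_ancestor:
  assumes "(e, x) \<in> E\<^sup>*" and "x \<noteq> e"
  shows "nearest_ancestor_in E (D \<union> {e}) x (origin E e D x)"
proof -
  obtain w where w: "nearest_ancestor_in E (D \<union> {e}) x w"
    using nearest_ancestor_in_exists[OF assms] by blast
  have "origin E e D x = (THE w. nearest_ancestor_in E (D \<union> {e}) x w)"
    unfolding origin_def nearest_ancestor_in_def by (simp only: Ball_def) meson
  also have "\<dots> = w"
    using w nearest_ancestor_in_unique by blast
  finally have "origin E e D x = w" .
  with w show ?thesis by simp
qed

lemma rooted_tree_finite_subtree:
  assumes "u \<in> V"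
  shows "finite (subtree E u)"
proof (rule finite_subset)
  show "subtree E u \<subseteq> V"
    using rooted_tree_rtrancl_closed assms unfolding subtree_def by blast
  show "finite V" using tree unfolding rooted_tree_def by blast
qed

lemma not_in_subtree_of_child: "(u, u1) \<in> E \<Longrightarrow> u \<notin> subtree E u1"
  using rooted_tree_acyclic unfolding subtree_def by (blast intro: rtrancl_into_trancl2)

lemma path_ends_through_branching:
  assumes "u \<in> V" and "u \<noteq> e" and "u \<in> D"
  shows "path_ends_through E e R D u = {u}"
proof -
  have root_u: "(e, u) \<in> E\<^sup>*" using \<open>u \<in> V\<close> by (rule rooted_tree_root_reaches)
  have "x = u" if "x \<noteq> e" "(origin E e D x, u) \<in> E\<^sup>+" "(u, x) \<in> E\<^sup>*" for x
  proof (rule ccontr)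
    assume "x \<noteq> u"
    with \<open>(u, x) \<in> E\<^sup>*\<close> have "(u, x) \<in> E\<^sup>+" by (simp add: rtrancl_eq_or_trancl)
    \<comment> \<open>then \<open>u \<in> D\<close> lies between \<open>x\<close> and its origin\<close>
    moreover have "(e, x) \<in> E\<^sup>*" using root_u \<open>(u, x) \<in> E\<^sup>*\<close> by (rule rtrancl_trans)
    ultimately have "(u, origin E e D x) \<in> E\<^sup>*"
      using origin_nearest_ancestor \<open>x \<noteq> e\<close> \<open>u \<in> D\<close> unfolding nearest_ancestor_in_def by blast
    with \<open>(origin E e D x, u) \<in> E\<^sup>+\<close> show False
      using rooted_tree_acyclic by (meson rtrancl_trancl_trancl)
  qed
  moreover have "(origin E e D u, u) \<in> E\<^sup>+"
    using origin_nearest_ancestor[OF root_u \<open>u \<noteq> e\<close>] unfolding nearest_ancestor_in_def by blast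
  ultimately show ?thesis
    using assms unfolding path_ends_through_def by blast
qed

lemma path_ends_through_single_child_non_branching:
  assumes "u \<in> V" and "u \<noteq> e" and "u \<notin> D" and child: "children E u = {u1}"
  shows "path_ends_through E e R D u = path_ends_through E e R D u1 \<union> ({u} \<inter> R)"
proof -
  have arc: "(u, u1) \<in> E" using child unfolding children_def by blast
  have root_u: "(e, u) \<in> E\<^sup>*" using \<open>u \<in> V\<close> by (rule rooted_tree_root_reaches)
  have below_u: "(u, x) \<in> E\<^sup>* \<longleftrightarrow> x = u \<or> (u1, x) \<in> E\<^sup>*" for x
    using subtree_single_child[OF child] unfolding subtree_def by blast
  \<comment> \<open>an origin lies in \<open>D \<union> {e}\<close>, hence is never \<open>u\<close>: above \<open>u1\<close> means strictly above \<open>u\<close>\<close>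
  have above_u1: "(origin E e D x, u1) \<in> E\<^sup>+ \<longleftrightarrow> (origin E e D x, u) \<in> E\<^sup>+"
    if "(u1, x) \<in> E\<^sup>*" "x \<noteq> e" for x
  proof
    have "(e, x) \<in> E\<^sup>*" using root_u arc that(1) by (meson rtrancl_into_rtrancl rtrancl_trans)
    then have "origin E e D x \<noteq> u"
      using origin_nearest_ancestor[OF _ \<open>x \<noteq> e\<close>] \<open>u \<notin> D\<close> \<open>u \<noteq> e\<close>
      unfolding nearest_ancestor_in_def by blast
    moreover assume "(origin E e D x, u1) \<in> E\<^sup>+"
    then have "(origin E e D x, u) \<in> E\<^sup>*"
      using arc by (intro trancl_into_last_arc_source[where v = u1])
        (auto intro: rooted_tree_parent_unique)
    ultimately show "(origin E e D x, u) \<in> E\<^sup>+" by (simp add: rtrancl_eq_or_trancl)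
  next
    assume "(origin E e D x, u) \<in> E\<^sup>+"
    then show "(origin E e D x, u1) \<in> E\<^sup>+" using arc by (rule trancl_into_trancl)
  qed
  have origin_u: "(origin E e D u, u) \<in> E\<^sup>+"
    using origin_nearest_ancestor[OF root_u \<open>u \<noteq> e\<close>] unfolding nearest_ancestor_in_def by blast
  show ?thesis
  proof (rule set_eqI)
    fix x
    show "x \<in> path_ends_through E e R D u \<longleftrightarrow>
      x \<in> path_ends_through E e R D u1 \<union> ({u} \<inter> R)"
    proof (cases "x = u")
      case True
      then show ?thesis
        using origin_u assms(2,3) unfolding path_ends_through_def by auto
    next
      case False
      then show ?thesis
        using below_u[of x] above_u1[of x] unfolding path_ends_through_def by auto
    qed
  qed
qed

lemma pn_single_child:
  assumes "u \<in> V" and "u \<noteq> e" and child: "children E u = {u1}"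
  shows "pn V E e R D u =
    (if u \<in> D then 1 else if u \<in> R then pn V E e R D u1 + 1 else pn V E e R D u1)"
proof (cases "u \<in> D")
  case True
  then show ?thesis
    using path_ends_through_branching assms by (simp add: pn_eq_card_path_ends_through)
next
  case False
  have arc: "(u, u1) \<in> E" using child unfolding children_def by blast
  then have "u1 \<in> V" using rooted_tree_arc_in_V by blast
  have "u \<notin> path_ends_through E e R D u1"
    using not_in_subtree_of_child[OF arc] unfolding path_ends_through_def subtree_def by blast
  moreover have "finite (path_ends_through E e R D u1)"
    using rooted_tree_finite_subtree[OF \<open>u1 \<in> V\<close>] unfolding path_ends_through_def subtree_def
    by (rule rev_finite_subset) blast
  ultimately show ?thesis
    using path_ends_through_single_child_non_branching[OF assms(1,2) False child]
    by (simp add: pn_eq_card_path_ends_through False)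
qed

end

theorem lemma1:
  fixes V :: "'a set" and E :: "('a \<times> 'a) set" and e u u1 :: 'a and R D :: "'a set"
    and b d load :: nat
  assumes "rooted_tree V E e"
    and "R \<subseteq> V" and "leaves V E \<subseteq> R"
    and "D \<subseteq> V"
    and "u \<in> V" and "u \<noteq> e"
    and "children E u = {u1}"
    and "window V E e R D u1 = (b, d, load)"
  shows "window V E e R D u =
    (if u \<in> D then (1, d + 1, load + 1)
     else if u \<in> R then (b + 1, d, load + b + 1)
     else (b, d, load + b))"
proof -
  note tree = assms(1) and child = assms(7)
  have arc: "(u, u1) \<in> E" using child unfolding children_def by blast
  have subtree_u: "subtree E u = insert u (subtree E u1)"
    using subtree_single_child[OF child] .
  have u_new: "u \<notin> subtree E u1" using not_in_subtree_of_child[OF tree arc] .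
  have finite_u1: "finite (subtree E u1)"
    using rooted_tree_finite_subtree[OF tree] rooted_tree_arc_in_V[OF tree arc] by blast
  have window_u1: "pn V E e R D u1 = b" "card (D \<inter> subtree E u1) = d"
      "(\<Sum>w\<in>subtree E u1. pn V E e R D w) = load"
    using assms(8) unfolding window_def by auto
  have "card (D \<inter> subtree E u) = (if u \<in> D then d + 1 else d)"
    using subtree_u u_new finite_u1 window_u1(2) by (simp add: Int_insert_right)
  moreover have "(\<Sum>w\<in>subtree E u. pn V E e R D w) = pn V E e R D u + load"
    using subtree_u u_new finite_u1 window_u1(3) by simp
  ultimately show ?thesis
    unfolding window_def using pn_single_child[OF tree assms(5,6) child] window_u1(1) by simp
qed

end
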